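(* Let $\mathcal G=G(n;S)$ be an integral circulant graph with $n$ odd, and let $A$ be its adjacency matrix. Then there do not exist $0\leq a<b\leq n-1$ and real $t>0$ such that $\left|\left(e^{\iota A t}\right)_{a,b}\right|=1$, where $\iota=\sqrt{-1}$. In other words, an integral circulant graph with an odd number of vertices does not admit perfect state transfer.
   Context: For a set $S\subseteq\{1,\dots,n-1\}$ with $s\in S$ iff $n-s\in S$, the circulant graph $G(n;S)$ is the undirected graph on vertex set $\mathbb{Z}_n=\{0,\dots,n-1\}$ in which $i$ and $j$ are adjacent iff $i-j \bmod n\in S$. A graph is integral if all eigenvalues of its adjacency matrix are integers. Perfect state transfer between vertices $a$ and $b$ means there is $0<t<\infty$ with $|\langle a|e^{\iota A t}|b\rangle|=1$, where $\langle a|M|b\rangle$ denotes the $(a,b)$ entry of the matrix $M$. *)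

theory Defs
  imports Complex_Main "Jordan_Normal_Form.Char_Poly"
begin

text \<open>Adjacency matrix of the circulant graph G(n;S) on vertex set Z_n = {0..n-1}:
  i and j are adjacent iff (i - j) mod n is in S.\<close>
definition circulant_adj :: "nat \<Rightarrow> nat set \<Rightarrow> complex mat" where
  "circulant_adj n S = mat n n (\<lambda>(i,j). if (i + n - j) mod n \<in> S then 1 else 0)"

definition circulant_set :: "nat \<Rightarrow> nat set \<Rightarrow> bool" where
  "circulant_set n S \<longleftrightarrow> S \<subseteq> {1..n-1} \<and> (\<forall>s \<in> {1..n-1}. s \<in> S \<longleftrightarrow> n - s \<in> S)"

definition integral_mat :: "complex mat \<Rightarrow> bool" where
  "integral_mat A \<longleftrightarrow> (\<forall>e. eigenvalue A e \<longrightarrow> e \<in> \<int>)"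

definition mat_exp :: "complex mat \<Rightarrow> complex mat" where
  "mat_exp A = mat (dim_row A) (dim_col A) (\<lambda>(i,j). \<Sum>k. (A ^\<^sub>m k) $$ (i,j) / of_nat (fact k))"

end

theory Submission
  imports Defs
begin

(* The adjacency matrix A of a circulant graph is diagonalised by the characters of Z_n, hence so
   is U = exp (i t A), and U a b = f (a - b) where f is the inverse discrete Fourier transform of
   the unimodular numbers exp (i t \<lambda>_j). Since S = -S, the eigenvalues \<lambda>_j are real and
   \<lambda>_(-j) = \<lambda>_j, so f (-x) = f x, while Parseval gives \<Sum>x. |f x|^2 = 1. For odd n and a \<noteq> b
   the residues a - b and b - a are distinct, so |U a b|^2 \<le> 1/2. *)

definition unity_root :: "nat \<Rightarrow> int \<Rightarrow> complex" where
  "unity_root n x = cis (2 * pi * of_int x / of_nat n)"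

lemma unity_root_add: "unity_root n (x + y) = unity_root n x * unity_root n y"
  unfolding unity_root_def cis_mult by (simp add: add_divide_distrib distrib_left)

lemma unity_root_uminus: "unity_root n (- x) = cnj (unity_root n x)"
  unfolding unity_root_def cis_cnj by simp

lemma unity_root_power: "unity_root n x ^ k = unity_root n (int k * x)"
  unfolding unity_root_def DeMoivre by (simp add: mult_ac)

lemma unity_root_multiple: "unity_root n (int n * k) = 1"
proof (cases "n = 0")
  case False
  then have "2 * pi * of_int (int n * k) / of_nat n = 2 * pi * of_int k"
    by simp
  then show ?thesis
    unfolding unity_root_def by simp
qed (simp add: unity_root_def)

lemma unity_root_cong:
  assumes "int n dvd x - y"
  shows "unity_root n x = unity_root n y"
proof -
  from assms obtain k where "x = y + int n * k"
    by (metis add.commute diff_add_cancel dvdE)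
  then show ?thesis
    by (simp add: unity_root_add unity_root_multiple)
qed

lemma unity_root_eq_1_iff:
  assumes "n > 0"
  shows "unity_root n x = 1 \<longleftrightarrow> int n dvd x"
proof
  assume "unity_root n x = 1"
  then have "cos (2 * pi * of_int x / of_nat n) = 1"
    unfolding unity_root_def by (metis cis.sel(1) one_complex.sel(1))
  then obtain m :: int where "2 * pi * of_int x / of_nat n = of_int m * 2 * pi"
    using cos_one_2pi_int by metis
  then have "real_of_int x = real_of_int m * real n"
    using assms by (simp add: field_simps)
  then have "x = m * int n"
    by (metis of_int_eq_iff of_int_mult of_int_of_nat_eq)
  then show "int n dvd x"
    by simp
qed (auto simp: unity_root_multiple)

lemma sum_unity_root:
  assumes "n > 0"
  shows "(\<Sum>j<n. unity_root n (int j * x)) = (if int n dvd x then of_nat n else 0)"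
proof (cases "int n dvd x")
  case True
  then have "unity_root n (int j * x) = 1" for j
    by (metis dvd_mult unity_root_cong unity_root_multiple diff_0_right mult_zero_right)
  then show ?thesis
    using True by simp
next
  case False
  then have "unity_root n x \<noteq> 1"
    using unity_root_eq_1_iff[OF assms] by blast
  moreover have "unity_root n x ^ n = 1"
    by (simp add: unity_root_power unity_root_multiple)
  ultimately have "(\<Sum>j<n. unity_root n x ^ j) = 0"
    by (simp add: geometric_sum)
  then show ?thesis
    using False by (simp add: unity_root_power)
qed

lemma reflect_mod_involutive:
  fixes c d n :: nat
  assumes "c < n" "d < n"
  shows "(c + n - (c + n - d) mod n) mod n = d"
proof (cases "d \<le> c")
  case True
  then have "(c + n - d) mod n = c - d"
    using assms by (simp add: mod_if)
  then show ?thesis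
    using True assms by simp
next
  case False
  then show ?thesis
    using assms by simp
qed

lemma sum_reflect_mod:
  fixes c n :: nat
  assumes "c < n"
  shows "(\<Sum>d<n. f ((c + n - d) mod n)) = (\<Sum>d<n. f d)"
  by (rule sum.reindex_bij_witness[of _ "\<lambda>d. (c + n - d) mod n" "\<lambda>d. (c + n - d) mod n"])
    (use assms reflect_mod_involutive in auto)

lemma unity_root_reflect_mod:
  assumes "d < n"
  shows "unity_root n (int ((c + n - d) mod n) * y) = unity_root n ((int c - int d) * y)"
proof (rule unity_root_cong)
  have "int ((c + n - d) mod n) = (int c - int d + int n) mod int n"
    using assms by (simp add: of_nat_mod of_nat_diff algebra_simps)
  also have "\<dots> = (int c - int d) mod int n"
    by (rule mod_add_self2)
  finally have "int n dvd int ((c + n - d) mod n) - (int c - int d)"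
    by (simp add: mod_eq_dvd_iff[symmetric])
  then show "int n dvd int ((c + n - d) mod n) * y - (int c - int d) * y"
    by (metis dvd_mult2 left_diff_distrib)
qed

definition inverse_dft :: "nat \<Rightarrow> (nat \<Rightarrow> complex) \<Rightarrow> int \<Rightarrow> complex" where
  "inverse_dft n z x = (\<Sum>j<n. z j * unity_root n (int j * x)) / of_nat n"

lemma inverse_dft_cong:
  assumes "int n dvd x - y"
  shows "inverse_dft n z x = inverse_dft n z y"
proof -
  have "unity_root n (int j * x) = unity_root n (int j * y)" for j
  proof (rule unity_root_cong)
    have "int n dvd int j * (x - y)"
      using assms by (rule dvd_mult)
    then show "int n dvd int j * x - int j * y"
      by (simp add: right_diff_distrib)
  qed
  then show ?thesis
    unfolding inverse_dft_def by simp
qed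

lemma inverse_dft_uminus:
  assumes "n > 0" and "\<And>j. j < n \<Longrightarrow> z ((n - j) mod n) = z j"
  shows "inverse_dft n z (- x) = inverse_dft n z x"
proof -
  have "(\<Sum>j<n. z j * unity_root n (int j * - x))
      = (\<Sum>j<n. z ((0 + n - j) mod n) * unity_root n (int ((0 + n - j) mod n) * - x))"
    by (rule sum_reflect_mod[OF assms(1), where f = "\<lambda>j. z j * unity_root n (int j * - x)", symmetric])
  also have "\<dots> = (\<Sum>j<n. z j * unity_root n (int j * x))"
  proof (intro sum.cong refl)
    fix j
    assume "j \<in> {..<n}"
    then have "j < n"
      by simp
    have "unity_root n (int ((0 + n - j) mod n) * - x) = unity_root n (int j * x)"
      using unity_root_reflect_mod[OF \<open>j < n\<close>, of 0 "- x"] by simp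
    then show "z ((0 + n - j) mod n) * unity_root n (int ((0 + n - j) mod n) * - x)
        = z j * unity_root n (int j * x)"
      using assms(2)[OF \<open>j < n\<close>] by simp
  qed
  finally show ?thesis
    unfolding inverse_dft_def by simp
qed

lemma sum_unity_root_orthogonal:
  assumes "j < n" "l < n"
  shows "(\<Sum>x<n. unity_root n (int x * (int j - int l))) = (if j = l then of_nat n else 0)"
proof -
  have "int n dvd int j - int l \<longleftrightarrow> j = l"
    using assms by (auto simp flip: mod_eq_dvd_iff)
  then show ?thesis
    using assms by (simp add: sum_unity_root)
qed

lemma inverse_dft_mult_cnj:
  "inverse_dft n z x * cnj (inverse_dft n z x)
    = (\<Sum>j<n. \<Sum>l<n. z j * cnj (z l) * unity_root n (x * (int j - int l))) / of_nat n ^ 2"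
proof -
  have "unity_root n (int j * x) * cnj (unity_root n (int l * x))
      = unity_root n (x * (int j - int l))" for j l
    by (simp add: unity_root_uminus[symmetric] unity_root_add[symmetric] algebra_simps)
  then show ?thesis
    by (simp add: inverse_dft_def cnj_sum sum_product power2_eq_square mult_ac)
qed

lemma sum_norm_inverse_dft_squared:
  "(\<Sum>x<n. cmod (inverse_dft n z (int x)) ^ 2) = (\<Sum>j<n. cmod (z j) ^ 2) / n"
proof -
  have "complex_of_real (\<Sum>x<n. cmod (inverse_dft n z (int x)) ^ 2)
      = (\<Sum>x<n. inverse_dft n z (int x) * cnj (inverse_dft n z (int x)))"
    by (simp only: of_real_sum complex_norm_square)
  also have "\<dots> = (\<Sum>j<n. \<Sum>l<n. z j * cnj (z l)
      * (\<Sum>x<n. unity_root n (int x * (int j - int l)))) / of_nat n ^ 2"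
  proof -
    have swap: "(\<Sum>x<n. \<Sum>j<n. \<Sum>l<n. f x j l) = (\<Sum>j<n. \<Sum>l<n. \<Sum>x<n. f x j l)"
      for f :: "nat \<Rightarrow> nat \<Rightarrow> nat \<Rightarrow> complex"
      by (subst sum.swap) (rule sum.cong[OF refl sum.swap])
    show ?thesis
      unfolding inverse_dft_mult_cnj sum_divide_distrib[symmetric] sum_distrib_left by (subst swap) (rule refl)
  qed
  also have "\<dots> = (\<Sum>j<n. z j * cnj (z j) * of_nat n) / of_nat n ^ 2"
  proof -
    have "(\<Sum>l<n. z j * cnj (z l) * (\<Sum>x<n. unity_root n (int x * (int j - int l))))
        = z j * cnj (z j) * of_nat n" if "j < n" for j
      using that by (subst sum.cong[OF refl, where h = "\<lambda>l. if l = j then z j * cnj (z j) * of_nat n else 0"])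
        (auto simp: sum_unity_root_orthogonal)
    then show ?thesis
      by simp
  qed
  also have "\<dots> = complex_of_real ((\<Sum>j<n. cmod (z j) ^ 2) / n)"
  proof -
    have "(\<Sum>j<n. z j * cnj (z j) * of_nat n) = of_nat n * complex_of_real (\<Sum>j<n. cmod (z j) ^ 2)"
      by (simp only: of_real_sum complex_norm_square sum_distrib_left) (simp add: mult_ac)
    then show ?thesis
      by (cases "n = 0") (simp_all add: power2_eq_square)
  qed
  finally show ?thesis
    using of_real_eq_iff by blast
qed

lemma norm_inverse_dft_squared_le_half:
  assumes "odd n"
    and unimodular: "\<And>j. j < n \<Longrightarrow> cmod (z j) = 1"
    and symmetric: "\<And>j. j < n \<Longrightarrow> z ((n - j) mod n) = z j"
    and "\<not> int n dvd x"
  shows "cmod (inverse_dft n z x) ^ 2 \<le> 1 / 2"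
proof -
  let ?f = "inverse_dft n z"
  have "n > 0"
    using \<open>odd n\<close> odd_pos by blast
  define p q where "p = nat (x mod int n)" and "q = nat (- x mod int n)"
  have "p < n" "q < n"
    using \<open>n > 0\<close> unfolding p_def q_def by (simp_all add: nat_less_iff)
  have "?f (int p) = ?f x"
    using \<open>n > 0\<close> unfolding p_def by (intro inverse_dft_cong) (simp add: mod_eq_dvd_iff[symmetric])
  moreover have "?f (int q) = ?f x"
  proof -
    have "int q = - x mod int n"
      using \<open>n > 0\<close> unfolding q_def by simp
    then have "?f (int q) = ?f (- x)"
      by (intro inverse_dft_cong) (metis mod_eq_dvd_iff mod_mod_trivial)
    then show ?thesis
      using inverse_dft_uminus[of n z, OF \<open>n > 0\<close> symmetric] by simp
  qed
  moreover have "p \<noteq> q"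
  proof
    assume "p = q"
    then have "x mod int n = - x mod int n"
      using \<open>n > 0\<close> unfolding p_def q_def by (simp add: eq_nat_nat_iff)
    then have "int n dvd x * 2"
      by (simp add: mod_eq_dvd_iff mult.commute)
    moreover have "coprime (int n) 2"
      using \<open>odd n\<close> by simp
    ultimately show False
      using \<open>\<not> int n dvd x\<close> coprime_dvd_mult_left_iff by blast
  qed
  ultimately have "2 * cmod (?f x) ^ 2 = (\<Sum>y\<in>{p, q}. cmod (?f (int y)) ^ 2)"
    by simp
  also have "\<dots> \<le> (\<Sum>y<n. cmod (?f (int y)) ^ 2)"
    using \<open>p < n\<close> \<open>q < n\<close> by (intro sum_mono2) auto
  also have "\<dots> = 1"
    using \<open>n > 0\<close> by (simp add: sum_norm_inverse_dft_squared unimodular)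
  finally show ?thesis
    by simp
qed

definition fourier_vec :: "nat \<Rightarrow> nat \<Rightarrow> complex vec" where
  "fourier_vec n j = vec n (\<lambda>c. unity_root n (int j * int c))"

lemma fourier_vec_carrier: "fourier_vec n j \<in> carrier_vec n"
  unfolding fourier_vec_def by simp

lemma mult_mat_vec_smult_mat:
  fixes A :: "'a :: comm_semiring_0 mat"
  assumes "A \<in> carrier_mat nr nc" "v \<in> carrier_vec nc"
  shows "(c \<cdot>\<^sub>m A) *\<^sub>v v = c \<cdot>\<^sub>v (A *\<^sub>v v)"
proof -
  have "dim_col A = nc" "dim_vec v = nc"
    using assms by auto
  then show ?thesis
    by (intro eq_vecI) simp_all
qed

lemma mat_entry_fourier_inversion:
  assumes M: "M \<in> carrier_mat n n" and "a < n" "b < n"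
  shows "M $$ (a, b)
    = (\<Sum>j<n. (M *\<^sub>v fourier_vec n j) $ a * unity_root n (- (int j * int b))) / of_nat n"
proof -
  have "(\<Sum>j<n. (M *\<^sub>v fourier_vec n j) $ a * unity_root n (- (int j * int b)))
      = (\<Sum>j<n. \<Sum>c<n. M $$ (a, c) * unity_root n (int j * (int c - int b)))"
    using M \<open>a < n\<close>
    by (simp add: fourier_vec_def scalar_prod_def lessThan_atLeast0 sum_distrib_right mult.assoc
        right_diff_distrib unity_root_add[symmetric])
  also have "\<dots> = (\<Sum>c<n. M $$ (a, c) * (\<Sum>j<n. unity_root n (int j * (int c - int b))))"
    by (subst sum.swap) (simp add: sum_distrib_left)
  also have "\<dots> = (\<Sum>c<n. if c = b then M $$ (a, b) * of_nat n else 0)"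
    using \<open>b < n\<close> by (intro sum.cong refl) (simp add: sum_unity_root_orthogonal)
  also have "\<dots> = M $$ (a, b) * of_nat n"
    using \<open>b < n\<close> by simp
  finally show ?thesis
    using \<open>b < n\<close> by simp
qed

lemma pow_mat_entry_fourier:
  assumes M: "M \<in> carrier_mat n n"
    and eigen: "\<And>j. j < n \<Longrightarrow> M *\<^sub>v fourier_vec n j = \<mu> j \<cdot>\<^sub>v fourier_vec n j"
    and "a < n" "b < n"
  shows "(M ^\<^sub>m k) $$ (a, b) = inverse_dft n (\<lambda>j. \<mu> j ^ k) (int a - int b)"
proof -
  have "M ^\<^sub>m k *\<^sub>v fourier_vec n j = \<mu> j ^ k \<cdot>\<^sub>v fourier_vec n j" if "j < n" for j
  proof (rule eigenvector_pow[OF M])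
    have "fourier_vec n j $ 0 = 1"
      using \<open>a < n\<close> by (simp add: fourier_vec_def unity_root_def)
    then have "fourier_vec n j \<noteq> 0\<^sub>v n"
      using \<open>a < n\<close> by auto
    then show "eigenvector M (fourier_vec n j) (\<mu> j)"
      using M eigen[OF that] by (simp add: eigenvector_def fourier_vec_carrier)
  qed
  then have "(M ^\<^sub>m k) $$ (a, b) = (\<Sum>j<n. \<mu> j ^ k * unity_root n (int j * int a)
      * unity_root n (- (int j * int b))) / of_nat n"
    using mat_entry_fourier_inversion[of "M ^\<^sub>m k" n a b] M \<open>a < n\<close> \<open>b < n\<close>
    by (simp add: fourier_vec_def)
  then show ?thesis
    by (simp add: inverse_dft_def right_diff_distrib unity_root_add[symmetric] mult.assoc)
qed

lemma mat_exp_entry_fourier: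
  assumes M: "M \<in> carrier_mat n n"
    and eigen: "\<And>j. j < n \<Longrightarrow> M *\<^sub>v fourier_vec n j = \<mu> j \<cdot>\<^sub>v fourier_vec n j"
    and "a < n" "b < n"
  shows "mat_exp M $$ (a, b) = inverse_dft n (\<lambda>j. exp (\<mu> j)) (int a - int b)"
proof -
  let ?e = "\<lambda>j. unity_root n (int j * (int a - int b))"
  have exp_sums: "(\<lambda>k. w ^ k / of_nat (fact k)) sums exp w" for w :: complex
    using exp_converges[of w] by (simp add: scaleR_conv_of_real field_simps)
  have "(M ^\<^sub>m k) $$ (a, b) / of_nat (fact k)
      = (\<Sum>j<n. \<mu> j ^ k / of_nat (fact k) * ?e j) / of_nat n" for k
    by (simp add: pow_mat_entry_fourier[OF assms] inverse_dft_def sum_divide_distrib mult.commute)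
  moreover have "(\<lambda>k. (\<Sum>j<n. \<mu> j ^ k / of_nat (fact k) * ?e j) / of_nat n)
      sums inverse_dft n (\<lambda>j. exp (\<mu> j)) (int a - int b)"
    unfolding inverse_dft_def by (intro sums_divide sums_sum sums_mult2 exp_sums)
  ultimately show ?thesis
    using M \<open>a < n\<close> \<open>b < n\<close> by (simp add: mat_exp_def sums_iff)
qed

definition circulant_eigenvalue :: "nat \<Rightarrow> nat set \<Rightarrow> nat \<Rightarrow> complex" where
  "circulant_eigenvalue n S j = (\<Sum>s\<in>{..<n} \<inter> S. unity_root n (- (int j * int s)))"

lemma circulant_adj_carrier: "circulant_adj n S \<in> carrier_mat n n"
  unfolding circulant_adj_def by simp

lemma circulant_adj_mult_fourier_vec:
  "circulant_adj n S *\<^sub>v fourier_vec n j = circulant_eigenvalue n S j \<cdot>\<^sub>v fourier_vec n j"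
proof (rule eq_vecI)
  fix c
  assume "c < dim_vec (circulant_eigenvalue n S j \<cdot>\<^sub>v fourier_vec n j)"
  then have "c < n"
    by (simp add: fourier_vec_def)
  let ?f = "\<lambda>d. (if (c + n - d) mod n \<in> S then 1 else 0) * unity_root n (int j * int d)"
  have "(circulant_adj n S *\<^sub>v fourier_vec n j) $ c = (\<Sum>d<n. ?f d)"
    using \<open>c < n\<close>
    by (simp add: circulant_adj_def fourier_vec_def scalar_prod_def lessThan_atLeast0)
  also have "\<dots> = (\<Sum>s<n. ?f ((c + n - s) mod n))"
    by (rule sum_reflect_mod[OF \<open>c < n\<close>, where f = ?f, symmetric])
  also have "\<dots> = (\<Sum>s<n. if s \<in> S then unity_root n (int c * int j) * unity_root n (- (int j * int s)) else 0)"
  proof (intro sum.cong refl)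
    fix s
    assume "s \<in> {..<n}"
    have "unity_root n (int j * int ((c + n - s) mod n))
        = unity_root n (int ((c + n - s) mod n) * int j)"
      by (simp only: mult.commute)
    also have "\<dots> = unity_root n ((int c - int s) * int j)"
      using \<open>s \<in> {..<n}\<close> by (simp add: unity_root_reflect_mod)
    also have "\<dots> = unity_root n (int c * int j) * unity_root n (- (int j * int s))"
      by (simp add: unity_root_add[symmetric] algebra_simps)
    finally show "?f ((c + n - s) mod n)
        = (if s \<in> S then unity_root n (int c * int j) * unity_root n (- (int j * int s)) else 0)"
      using \<open>c < n\<close> \<open>s \<in> {..<n}\<close> by (simp add: reflect_mod_involutive)
  qed
  also have "\<dots> = unity_root n (int c * int j) * circulant_eigenvalue n S j"
    unfolding circulant_eigenvalue_def sum.inter_restrict[OF finite_lessThan] sum_distrib_left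
    by (intro sum.cong) auto
  finally show "(circulant_adj n S *\<^sub>v fourier_vec n j) $ c
      = (circulant_eigenvalue n S j \<cdot>\<^sub>v fourier_vec n j) $ c"
    using \<open>c < n\<close> by (simp add: fourier_vec_def mult.commute)
qed (simp add: circulant_adj_def fourier_vec_def)

lemma circulant_eigenvalue_alt:
  assumes "circulant_set n S"
  shows "circulant_eigenvalue n S j = (\<Sum>s\<in>{..<n} \<inter> S. unity_root n (int j * int s))"
proof -
  have S: "\<And>s. s \<in> S \<Longrightarrow> s < n" "\<And>s. s \<in> S \<Longrightarrow> n - s \<in> S"
    using assms unfolding circulant_set_def by fastforce+
  then have "{..<n} \<inter> S = S"
    by auto
  have "(\<Sum>s\<in>S. unity_root n (- (int j * int s))) = (\<Sum>s\<in>S. unity_root n (- (int j * int (n - s))))"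
    by (rule sum.reindex_bij_witness[of _ "\<lambda>s. n - s" "\<lambda>s. n - s"]) (auto simp: S(2) less_imp_le[OF S(1)])
  also have "\<dots> = (\<Sum>s\<in>S. unity_root n (int j * int s))"
  proof (intro sum.cong refl unity_root_cong)
    fix s
    assume "s \<in> S"
    then have "- (int j * int (n - s)) - int j * int s = int n * - int j"
      using S(1) by (simp add: of_nat_diff less_imp_le algebra_simps)
    then show "int n dvd - (int j * int (n - s)) - int j * int s"
      by simp
  qed
  finally show ?thesis
    unfolding circulant_eigenvalue_def \<open>{..<n} \<inter> S = S\<close> .
qed

lemma circulant_eigenvalue_real:
  assumes "circulant_set n S"
  shows "circulant_eigenvalue n S j \<in> \<real>"
proof -
  have "cnj (circulant_eigenvalue n S j) = (\<Sum>s\<in>{..<n} \<inter> S. unity_root n (int j * int s))"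
    by (simp add: circulant_eigenvalue_def cnj_sum unity_root_uminus)
  then show ?thesis
    by (simp add: Reals_cnj_iff circulant_eigenvalue_alt[OF assms])
qed

lemma circulant_eigenvalue_reflect:
  assumes "circulant_set n S" and "j < n"
  shows "circulant_eigenvalue n S ((n - j) mod n) = circulant_eigenvalue n S j"
proof -
  have "unity_root n (- (int ((n - j) mod n) * int s)) = unity_root n (int j * int s)" for s
    using unity_root_reflect_mod[OF \<open>j < n\<close>, of 0 "- int s"] by simp
  then show ?thesis
    unfolding circulant_eigenvalue_alt[OF assms(1), of j] by (simp add: circulant_eigenvalue_def)
qed

lemma mat_exp_circulant_adj_entry:
  assumes "a < n" "b < n"
  shows "mat_exp (c \<cdot>\<^sub>m circulant_adj n S) $$ (a, b)
    = inverse_dft n (\<lambda>j. exp (c * circulant_eigenvalue n S j)) (int a - int b)"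
proof (rule mat_exp_entry_fourier)
  show "c \<cdot>\<^sub>m circulant_adj n S *\<^sub>v fourier_vec n j
      = (c * circulant_eigenvalue n S j) \<cdot>\<^sub>v fourier_vec n j" for j
    by (simp add: mult_mat_vec_smult_mat[OF circulant_adj_carrier fourier_vec_carrier]
        circulant_adj_mult_fourier_vec smult_smult_assoc)
qed (use assms circulant_adj_carrier in auto)

theorem proposition1:
  fixes n :: nat and S :: "nat set"
  assumes "odd n"
    and "circulant_set n S"
    and "integral_mat (circulant_adj n S)"
  shows "\<not> (\<exists>a b (t::real). a < b \<and> b \<le> n - 1 \<and> t > 0 \<and>
            cmod (mat_exp ((\<i> * complex_of_real t) \<cdot>\<^sub>m circulant_adj n S) $$ (a, b)) = 1)"
proof
  assume "\<exists>a b (t::real). a < b \<and> b \<le> n - 1 \<and> t > 0 \<and>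
            cmod (mat_exp ((\<i> * complex_of_real t) \<cdot>\<^sub>m circulant_adj n S) $$ (a, b)) = 1"
  then obtain a b and t :: real where "a < b" "b < n"
    and transfer: "cmod (mat_exp ((\<i> * t) \<cdot>\<^sub>m circulant_adj n S) $$ (a, b)) = 1"
    by fastforce
  have "cmod (exp (\<i> * t * circulant_eigenvalue n S j)) = 1" for j
    using circulant_eigenvalue_real[OF assms(2)] by (simp add: complex_is_Real_iff)
  moreover have "\<not> int n dvd int a - int b"
    using \<open>a < b\<close> \<open>b < n\<close> by (auto simp: dvd_diff_commute[of _ "int a"] dest: zdvd_imp_le)
  ultimately have "cmod (mat_exp ((\<i> * t) \<cdot>\<^sub>m circulant_adj n S) $$ (a, b)) ^ 2 \<le> 1 / 2"
    using \<open>a < b\<close> \<open>b < n\<close> mat_exp_circulant_adj_entry norm_inverse_dft_squared_le_half[OF \<open>odd n\<close>]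
      circulant_eigenvalue_reflect[OF assms(2)]
    by simp
  with transfer show False
    by simp
qed

end
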